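(* The initial algebra of the endofunctor $F=M\otimes-$ on $\mathbf{Met_3}^{L}$ is the initial $F$-algebra $(G,g)$ of $\mathbf{Set_3}$ with $G$ endowed with the discrete metric.
   Context: A tripointed set is a set with three distinct distinguished points $T,L,R$; $\mathbf{Set_3}$ is the category of tripointed sets with maps preserving $T,L,R$. A tripointed metric space is a tripointed set with a metric bounded by $1$ in which $T,L,R$ have pairwise distance $1$; $\mathbf{Met_3}^{L}$ has these as objects and Lipschitz maps preserving $T,L,R$ as morphisms. Let $M=\{a,b,c\}$. $F=M\otimes-$: $M\otimes X$ is the quotient of $M\times X$ by the equivalence relation generated by $(b,T)\sim(a,L)$, $(a,R)\sim(c,T)$, $(c,L)\sim(b,R)$, elements written $m\otimes x$, distinguished points $a\otimes T$, $b\otimes L$, $c\otimes R$, and $(M\otimes f)(m\otimes x)=m\otimes f(x)$; in the metric setting $M\times X$ has metric $\tfrac12 d(x,y)$ within a copy and $1$ between different copies, and $M\otimes X$ has the quotient metric. An $F$-algebra is a pair $(A,\alpha\colon FA\to A)$, with algebra morphisms $h$ satisfying $h\circ\alpha=\beta\circ Fh$. Concretely, $G$ consists of expressions $m_0\otimes\cdots\otimes m_{n-1}\otimes z$ ($n\ge0$, $m_i\in M$, $z\in\{T,L,R\}$) modulo the identifications induced by the relations above and by $T=a\otimes T$, $L=b\otimes L$, $R=c\otimes R$ (the colimit in $\mathbf{Set_3}$ of $I\to FI\to F^2I\to\cdots$ with $I=\{T,L,R\}$), and $g(m\otimes w)=m\otimes w$. The discrete metric is $d(x,y)=1$ for $x\ne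 y$. *)

theory Defs
  imports Complex_Main
begin

datatype M = Ma | Mb | Mc

datatype 'a tps = TPS (car: "'a set") (pT: 'a) (pL: 'a) (pR: 'a)

definition met3 :: "'a tps \<Rightarrow> ('a \<Rightarrow> 'a \<Rightarrow> real) \<Rightarrow> bool" where
  "met3 S d \<longleftrightarrow>
     pT S \<in> car S \<and> pL S \<in> car S \<and> pR S \<in> car S \<and>
     (\<forall>x\<in>car S. \<forall>y\<in>car S. 0 \<le> d x y \<and> d x y \<le> 1 \<and> (d x y = 0 \<longleftrightarrow> x = y) \<and> d x y = d y x) \<and>
     (\<forall>x\<in>car S. \<forall>y\<in>car S. \<forall>z\<in>car S. d x z \<le> d x y + d y z) \<and>
     d (pT S) (pL S) = 1 \<and> d (pT S) (pR S) = 1 \<and> d (pL S) (pR S) = 1"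

definition hom3 :: "'a tps \<Rightarrow> ('a \<Rightarrow> 'a \<Rightarrow> real) \<Rightarrow> 'b tps \<Rightarrow> ('b \<Rightarrow> 'b \<Rightarrow> real)
                     \<Rightarrow> ('a \<Rightarrow> 'b) \<Rightarrow> bool" where
  "hom3 S d S' d' f \<longleftrightarrow>
     f ` car S \<subseteq> car S' \<and> f (pT S) = pT S' \<and> f (pL S) = pL S' \<and> f (pR S) = pR S' \<and>
     (\<exists>K. \<forall>x\<in>car S. \<forall>y\<in>car S. d' (f x) (f y) \<le> K * d x y)"

definition tens_base :: "'a tps \<Rightarrow> ((M \<times> 'a) \<times> (M \<times> 'a)) set" where
  "tens_base S = {((Mb, pT S), (Ma, pL S)), ((Ma, pR S), (Mc, pT S)), ((Mc, pL S), (Mb, pR S))}"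

definition tens_rel :: "'a tps \<Rightarrow> ((M \<times> 'a) \<times> (M \<times> 'a)) set" where
  "tens_rel S = (tens_base S \<union> (tens_base S)\<inverse>)\<^sup>*"

definition tcls :: "'a tps \<Rightarrow> M \<Rightarrow> 'a \<Rightarrow> (M \<times> 'a) set" where
  "tcls S m x = tens_rel S `` {(m, x)}"

definition tens :: "'a tps \<Rightarrow> (M \<times> 'a) set tps" where
  "tens S = TPS ((UNIV \<times> car S) // tens_rel S)
                (tcls S Ma (pT S)) (tcls S Mb (pL S)) (tcls S Mc (pR S))"

text \<open>(M \<otimes> f)(m \<otimes> x) = m \<otimes> f x (union over representatives of the class).\<close>
definition tmap :: "'a tps \<Rightarrow> 'b tps \<Rightarrow> ('a \<Rightarrow> 'b) \<Rightarrow> (M \<times> 'a) set \<Rightarrow> (M \<times> 'b) set" where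
  "tmap S S' f c = (\<Union>(m, x)\<in>c. tcls S' m (f x))"

definition prod_d :: "('a \<Rightarrow> 'a \<Rightarrow> real) \<Rightarrow> (M \<times> 'a) \<Rightarrow> (M \<times> 'a) \<Rightarrow> real" where
  "prod_d d p q = (if fst p = fst q then d (snd p) (snd q) / 2 else 1)"

definition qd :: "'a tps \<Rightarrow> ('a \<Rightarrow> 'a \<Rightarrow> real) \<Rightarrow> (M \<times> 'a) set \<Rightarrow> (M \<times> 'a) set \<Rightarrow> real" where
  "qd S d c1 c2 = Inf {(\<Sum>i<n. prod_d d (p i) (q i)) | n p q.
       n \<ge> 1 \<and> (\<forall>i<n. p i \<in> UNIV \<times> car S \<and> q i \<in> UNIV \<times> car S) \<and>
       p 0 \<in> c1 \<and> q (n - 1) \<in> c2 \<and>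
       (\<forall>i. Suc i < n \<longrightarrow> (q i, p (Suc i)) \<in> tens_rel S)}"

definition falg :: "'a tps \<Rightarrow> ('a \<Rightarrow> 'a \<Rightarrow> real) \<Rightarrow> ((M \<times> 'a) set \<Rightarrow> 'a) \<Rightarrow> bool" where
  "falg S d \<alpha> \<longleftrightarrow> met3 S d \<and> hom3 (tens S) (qd S d) S d \<alpha>"

datatype Z = ZT | ZL | ZR

text \<open>Words m_0 \<otimes> ... \<otimes> m_{n-1} \<otimes> z represented as (list of m_i, z).\<close>
definition G_base :: "((M list \<times> Z) \<times> (M list \<times> Z)) set" where
  "G_base = {((xs, ZT), (xs @ [Ma], ZT)) | xs. True} \<union>
            {((xs, ZL), (xs @ [Mb], ZL)) | xs. True} \<union>
            {((xs, ZR), (xs @ [Mc], ZR)) | xs. True} \<union>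
            {((xs @ [Mb], ZT), (xs @ [Ma], ZL)) | xs. True} \<union>
            {((xs @ [Ma], ZR), (xs @ [Mc], ZT)) | xs. True} \<union>
            {((xs @ [Mc], ZL), (xs @ [Mb], ZR)) | xs. True}"

definition G_rel :: "((M list \<times> Z) \<times> (M list \<times> Z)) set" where
  "G_rel = (G_base \<union> G_base\<inverse>)\<^sup>*"

definition Gcl :: "M list \<Rightarrow> Z \<Rightarrow> (M list \<times> Z) set" where
  "Gcl xs z = G_rel `` {(xs, z)}"

definition G :: "(M list \<times> Z) set tps" where
  "G = TPS (UNIV // G_rel) (Gcl [] ZT) (Gcl [] ZL) (Gcl [] ZR)"

definition gmap :: "(M \<times> (M list \<times> Z) set) set \<Rightarrow> (M list \<times> Z) set" where
  "gmap c = (\<Union>(m, w)\<in>c. \<Union>(xs, z)\<in>w. Gcl (m # xs) z)"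

definition disc :: "'a \<Rightarrow> 'a \<Rightarrow> real" where
  "disc x y = (if x = y then 0 else 1)"

end

theory Submission
  imports Defs
begin

text \<open>
  The Set_3-initial algebra G is the set of words m_0 \<otimes> ... \<otimes> m_{n-1} \<otimes> z, and an algebra
  map out of it is forced to be the evaluation of words, i.e. a fold. With the discrete metric
  on G both Lipschitz conditions come for free: a map out of a discrete space into a space of
  diameter at most 1 is 1-Lipschitz, and distinct points of M \<otimes> G lie at quotient distance at
  least 1/2, because every chain joining them must contain a link between two distinct points
  of M \<times> G, which costs at least 1/2. Hence g is 2-Lipschitz, and the initiality of (G, g) in
  Set_3 transfers verbatim to Met_3^L.
\<close>

lemma equiv_rtrancl_symcl: "equiv UNIV ((r \<union> r\<inverse>)\<^sup>*)"
  by (intro equivI refl_rtrancl sym_rtrancl trans_rtrancl) (auto simp: sym_def)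

lemma rtrancl_symcl_invariant:
  assumes inv: "\<And>a b. (a, b) \<in> r \<Longrightarrow> f a = f b" and "(a, b) \<in> (r \<union> r\<inverse>)\<^sup>*"
  shows "f a = f b"
  using assms(2) by induction (auto dest: inv)

lemma UN_rtrancl_symcl_class:
  assumes "\<And>a b. (a, b) \<in> r \<Longrightarrow> f a = f b"
  shows "(\<Union>x \<in> (r \<union> r\<inverse>)\<^sup>* `` {a}. f x) = f a"
  using rtrancl_symcl_invariant[of r f a, OF assms] by auto

lemma rtrancl_symcl_class_eq: "(a, b) \<in> r \<Longrightarrow> (r \<union> r\<inverse>)\<^sup>* `` {a} = (r \<union> r\<inverse>)\<^sup>* `` {b}"
  by (rule equiv_class_eq[OF equiv_rtrancl_symcl]) auto

lemma tens_sel: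
  "car (tens S) = (UNIV \<times> car S) // tens_rel S" "pT (tens S) = tcls S Ma (pT S)"
  "pL (tens S) = tcls S Mb (pL S)" "pR (tens S) = tcls S Mc (pR S)"
  unfolding tens_def by simp_all

lemma tcls_in_tens: "w \<in> car S \<Longrightarrow> tcls S m w \<in> car (tens S)"
  unfolding tens_sel tcls_def by (rule quotientI) simp

lemma tens_cases:
  assumes "c \<in> car (tens S)"
  obtains m w where "c = tcls S m w" "w \<in> car S"
  using assms unfolding tens_sel tcls_def by (auto elim: quotientE)

lemma tcls_glue:
  "tcls S Mb (pT S) = tcls S Ma (pL S)" "tcls S Ma (pR S) = tcls S Mc (pT S)"
  "tcls S Mc (pL S) = tcls S Mb (pR S)"
  unfolding tcls_def tens_rel_def by (rule rtrancl_symcl_class_eq, simp add: tens_base_def)+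

lemma tmap_tcls:
  assumes "f (pT S) = pT S'" "f (pL S) = pL S'" "f (pR S) = pR S'"
  shows "tmap S S' f (tcls S m w) = tcls S' m (f w)"
proof -
  have "tcls S' m (f x) = tcls S' m' (f x')" if "((m, x), (m', x')) \<in> tens_base S" for m x m' x'
    using that by (auto simp: tens_base_def assms tcls_glue)
  then show ?thesis
    unfolding tmap_def tcls_def[of S] tens_rel_def
    by (subst UN_rtrancl_symcl_class) auto
qed

lemma prod_d_disc_ge_half: "p \<noteq> q \<Longrightarrow> 1/2 \<le> prod_d disc p q"
  unfolding prod_d_def disc_def by (auto simp: prod_eq_iff)

lemma chain_stays_in_closed_set:
  assumes closed: "\<And>u v. u \<in> X \<Longrightarrow> (u, v) \<in> r \<Longrightarrow> v \<in> X"
    and trivial: "\<And>i. i < n \<Longrightarrow> p i = q i"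
    and start: "p 0 \<in> X"
    and links: "\<And>i. Suc i < n \<Longrightarrow> (q i, p (Suc i)) \<in> r"
    and "i < n"
  shows "q i \<in> X"
  using \<open>i < n\<close>
proof (induction i)
  case 0
  then show ?case using start trivial by simp
next
  case (Suc i)
  then have "p (Suc i) \<in> X" using links closed by auto
  then show ?case using Suc.prems trivial by simp
qed

lemma qd_disc_bounds:
  assumes x: "x \<in> car (tens S)" and y: "y \<in> car (tens S)"
  shows "0 \<le> qd S disc x y" and "x \<noteq> y \<Longrightarrow> 1/2 \<le> qd S disc x y"
proof -
  obtain a where a: "a \<in> UNIV \<times> car S" "x = tens_rel S `` {a}"
    using x unfolding tens_sel by (auto elim: quotientE)
  obtain b where b: "b \<in> UNIV \<times> car S" "y = tens_rel S `` {b}"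
    using y unfolding tens_sel by (auto elim: quotientE)
  have equiv: "equiv UNIV (tens_rel S)"
    unfolding tens_rel_def by (rule equiv_rtrancl_symcl)
  have x_closed: "v \<in> x" if "u \<in> x" "(u, v) \<in> tens_rel S" for u v
    using in_quotient_imp_closed[OF equiv _ that] a(2) by (auto intro: quotientI)
  define chains where "chains = {(\<Sum>i<n. prod_d disc (p i) (q i)) | n p q.
       n \<ge> 1 \<and> (\<forall>i<n. p i \<in> UNIV \<times> car S \<and> q i \<in> UNIV \<times> car S) \<and>
       p 0 \<in> x \<and> q (n - 1) \<in> y \<and> (\<forall>i. Suc i < n \<longrightarrow> (q i, p (Suc i)) \<in> tens_rel S)}"
  have qd: "qd S disc x y = Inf chains"
    unfolding qd_def chains_def ..
  have "prod_d disc a b \<in> chains"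
    unfolding chains_def mem_Collect_eq
    by (rule exI[of _ 1], rule exI[of _ "\<lambda>_. a"], rule exI[of _ "\<lambda>_. b"])
      (use a b equiv_class_self[OF equiv] in auto)
  then have nonempty: "chains \<noteq> {}" by blast
  have "0 \<le> s" if "s \<in> chains" for s
    using that unfolding chains_def prod_d_def disc_def by (auto intro!: sum_nonneg)
  then show "0 \<le> qd S disc x y"
    unfolding qd by (rule cInf_greatest[OF nonempty])
  assume "x \<noteq> y"
  then have disjoint: "x \<inter> y = {}"
    using quotient_disj[OF equiv] a(2) b(2) by (auto intro: quotientI)
  have "1/2 \<le> s" if "s \<in> chains" for s
  proof -
    obtain n p q where s: "s = (\<Sum>i<n. prod_d disc (p i) (q i))" and n: "n \<ge> 1"
      and start: "p 0 \<in> x" and stop: "q (n - 1) \<in> y"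
      and links: "\<forall>i. Suc i < n \<longrightarrow> (q i, p (Suc i)) \<in> tens_rel S"
      using \<open>s \<in> chains\<close> unfolding chains_def by blast
    obtain j where j: "j < n" "p j \<noteq> q j"
    proof (rule ccontr)
      assume "\<not> thesis"
      with that have "p i = q i" if "i < n" for i
        using that by blast
      then have "q (n - 1) \<in> x"
        using links n by (intro chain_stays_in_closed_set[of x "tens_rel S" n p q, OF x_closed _ start]) auto
      with stop disjoint show False by blast
    qed
    have "1/2 \<le> prod_d disc (p j) (q j)"
      using j(2) by (rule prod_d_disc_ge_half)
    also have "\<dots> \<le> s"
      unfolding s using j by (intro member_le_sum) (auto simp: prod_d_def disc_def)
    finally show ?thesis .
  qed
  then show "1/2 \<le> qd S disc x y"
    unfolding qd by (rule cInf_greatest[OF nonempty])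
qed

lemma G_sel: "car G = UNIV // G_rel" "pT G = Gcl [] ZT" "pL G = Gcl [] ZL" "pR G = Gcl [] ZR"
  unfolding G_def by simp_all

lemma equiv_G_rel: "equiv UNIV G_rel"
  unfolding G_rel_def by (rule equiv_rtrancl_symcl)

lemma Gcl_self: "(xs, z) \<in> Gcl xs z"
  unfolding Gcl_def by (rule equiv_class_self[OF equiv_G_rel]) simp

lemma Gcl_in_G: "Gcl xs z \<in> car G"
  unfolding G_sel Gcl_def by (rule quotientI) simp

lemma G_cases:
  assumes "x \<in> car G"
  obtains xs z where "x = Gcl xs z"
  using assms unfolding G_sel Gcl_def by (auto elim: quotientE)

lemma Gcl_eq_of_G_base: "((xs, z), (ys, z')) \<in> G_base \<Longrightarrow> Gcl xs z = Gcl ys z'"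
  unfolding Gcl_def G_rel_def by (rule rtrancl_symcl_class_eq)

lemma Gcl_vertex: "Gcl [Ma] ZT = Gcl [] ZT" "Gcl [Mb] ZL = Gcl [] ZL" "Gcl [Mc] ZR = Gcl [] ZR"
  by (rule Gcl_eq_of_G_base[symmetric], force simp: G_base_def)+

lemma Gcl_glue:
  "Gcl [Mb] ZT = Gcl [Ma] ZL" "Gcl [Ma] ZR = Gcl [Mc] ZT" "Gcl [Mc] ZL = Gcl [Mb] ZR"
  by (rule Gcl_eq_of_G_base, force simp: G_base_def)+

lemma G_base_Cons: "((xs, z), (ys, z')) \<in> G_base \<Longrightarrow> ((m # xs, z), (m # ys, z')) \<in> G_base"
  unfolding G_base_def by (elim UnE CollectE exE conjE; simp; metis append_Cons)

lemma foldr_respects_G_rel: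
  assumes "F Ma (P ZT) = P ZT" "F Mb (P ZL) = P ZL" "F Mc (P ZR) = P ZR"
    and "F Mb (P ZT) = F Ma (P ZL)" "F Ma (P ZR) = F Mc (P ZT)" "F Mc (P ZL) = F Mb (P ZR)"
    and "((xs, z), (ys, z')) \<in> G_rel"
  shows "foldr F xs (P z) = foldr F ys (P z')"
proof -
  let ?eval = "\<lambda>(xs, z). foldr F xs (P z)"
  have "?eval a = ?eval b" if "(a, b) \<in> G_base" for a b
    using that assms(1-6) unfolding G_base_def by auto
  from rtrancl_symcl_invariant[of G_base ?eval, OF this assms(7)[unfolded G_rel_def]] show ?thesis
    by simp
qed

lemma G_points_distinct: "pT G \<noteq> pL G" "pT G \<noteq> pR G" "pL G \<noteq> pR G"
proof -
  \<comment> \<open>Evaluate words in the Set_3-algebra Z where m \<otimes> z collapses to T unless z is the vertex of m.\<close>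
  define vertex where "vertex m = (case m of Ma \<Rightarrow> ZT | Mb \<Rightarrow> ZL | Mc \<Rightarrow> ZR)" for m
  define F where "F m z = (if z = vertex m then z else ZT)" for m z
  have "z = z'" if "Gcl [] z = Gcl [] z'" for z z'
  proof -
    have "(([], z), ([], z')) \<in> G_rel"
      using that unfolding Gcl_def by (rule eq_equiv_class[OF _ equiv_G_rel]) simp
    then have "foldr F [] (id z) = foldr F [] (id z')"
      by (rule foldr_respects_G_rel[rotated 6]) (simp_all add: F_def vertex_def)
    then show ?thesis by simp
  qed
  then show "pT G \<noteq> pL G" "pT G \<noteq> pR G" "pL G \<noteq> pR G"
    unfolding G_sel by blast+
qed

lemma gmap_tcls_Gcl: "gmap (tcls G m (Gcl xs z)) = Gcl (m # xs) z"
proof -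
  define prefix where "prefix m = (\<lambda>(ys, z'). Gcl (m # ys) z')" for m
  have "prefix m a = prefix m b" if "(a, b) \<in> G_base" for m a b
    using that Gcl_eq_of_G_base[OF G_base_Cons] by (auto simp: prefix_def)
  then have prefix_Gcl: "(\<Union>a\<in>Gcl xs z. prefix m a) = Gcl (m # xs) z" for m xs z
    unfolding Gcl_def[of xs] G_rel_def
    by (subst UN_rtrancl_symcl_class[of G_base "prefix m"]) (auto simp: prefix_def)
  let ?g = "\<lambda>(m, w). \<Union>a\<in>w. prefix m a"
  have "?g p = ?g q" if "(p, q) \<in> tens_base G" for p q
    using that unfolding tens_base_def G_sel by (elim insertE emptyE) (simp_all add: prefix_Gcl Gcl_glue)
  then have "gmap (tcls G m (Gcl xs z)) = ?g (m, Gcl xs z)"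
    unfolding gmap_def tcls_def tens_rel_def
    by (subst UN_rtrancl_symcl_class[of "tens_base G" ?g, symmetric]) (auto simp: prefix_def)
  then show ?thesis
    by (simp add: prefix_Gcl)
qed

lemma met3_disc:
  assumes "pT S \<in> car S" "pL S \<in> car S" "pR S \<in> car S"
    and "pT S \<noteq> pL S" "pT S \<noteq> pR S" "pL S \<noteq> pR S"
  shows "met3 S disc"
  using assms unfolding met3_def disc_def by auto

lemma met3_dist_le_1: "met3 S d \<Longrightarrow> x \<in> car S \<Longrightarrow> y \<in> car S \<Longrightarrow> d x y \<le> 1"
  unfolding met3_def by blast

lemma met3_dist_self: "met3 S d \<Longrightarrow> x \<in> car S \<Longrightarrow> d x x = 0"
  unfolding met3_def by blast

lemma hom3_disc:
  assumes "met3 S d" "f ` car T \<subseteq> car S"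
    and "f (pT T) = pT S" "f (pL T) = pL S" "f (pR T) = pR S"
  shows "hom3 T disc S d f"
proof -
  have "d (f x) (f y) \<le> 1 * disc x y" if "x \<in> car T" "y \<in> car T" for x y
  proof -
    have "f x \<in> car S" "f y \<in> car S"
      using that assms(2) by auto
    then show ?thesis
      using met3_dist_le_1[OF assms(1)] met3_dist_self[OF assms(1)]
      unfolding disc_def by (cases "x = y") auto
  qed
  with assms(2-5) show ?thesis
    unfolding hom3_def by blast
qed

lemma met3_G: "met3 G disc"
  using G_points_distinct Gcl_in_G[of "[]"] by (intro met3_disc) (simp_all add: G_sel(2-4))

lemma gmap_hom: "hom3 (tens G) (qd G disc) G disc gmap"
  unfolding hom3_def
proof (intro conjI)
  show "gmap ` car (tens G) \<subseteq> car G"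
    by (auto elim!: tens_cases G_cases simp: gmap_tcls_Gcl Gcl_in_G)
  show "gmap (pT (tens G)) = pT G" "gmap (pL (tens G)) = pL G" "gmap (pR (tens G)) = pR G"
    by (simp_all add: tens_sel G_sel gmap_tcls_Gcl Gcl_vertex)
  have "disc (gmap x) (gmap y) \<le> 2 * qd G disc x y" if "x \<in> car (tens G)" "y \<in> car (tens G)" for x y
    using qd_disc_bounds[OF that] by (cases "x = y") (auto simp: disc_def)
  then show "\<exists>K. \<forall>x\<in>car (tens G). \<forall>y\<in>car (tens G). disc (gmap x) (gmap y) \<le> K * qd G disc x y"
    by blast
qed

definition falg_hom ::
  "'a tps \<Rightarrow> ('a \<Rightarrow> 'a \<Rightarrow> real) \<Rightarrow> ((M \<times> 'a) set \<Rightarrow> 'a) \<Rightarrow>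
   'b tps \<Rightarrow> ('b \<Rightarrow> 'b \<Rightarrow> real) \<Rightarrow> ((M \<times> 'b) set \<Rightarrow> 'b) \<Rightarrow> ('a \<Rightarrow> 'b) \<Rightarrow> bool" where
  "falg_hom S d \<alpha> S' d' \<beta> h \<longleftrightarrow>
     hom3 S d S' d' h \<and> (\<forall>c\<in>car (tens S). h (\<alpha> c) = \<beta> (tmap S S' h c))"

lemma falg_hom_from_G_Cons:
  assumes "falg_hom G disc gmap S d \<alpha> h"
  shows "h (Gcl (m # xs) z) = \<alpha> (tcls S m (h (Gcl xs z)))"
proof -
  have pointed: "h (pT G) = pT S" "h (pL G) = pL S" "h (pR G) = pR S"
    using assms unfolding falg_hom_def hom3_def by auto
  have "h (Gcl (m # xs) z) = h (gmap (tcls G m (Gcl xs z)))"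
    by (simp add: gmap_tcls_Gcl)
  also have "\<dots> = \<alpha> (tmap G S h (tcls G m (Gcl xs z)))"
    using assms tcls_in_tens[OF Gcl_in_G] unfolding falg_hom_def by blast
  also have "\<dots> = \<alpha> (tcls S m (h (Gcl xs z)))"
    by (simp add: tmap_tcls[OF pointed])
  finally show ?thesis .
qed

lemma falg_hom_from_G_unique:
  assumes "falg_hom G disc gmap S d \<alpha> h1" "falg_hom G disc gmap S d \<alpha> h2" "x \<in> car G"
  shows "h1 x = h2 x"
proof -
  have "h1 (Gcl xs z) = h2 (Gcl xs z)" for xs z
  proof (induction xs)
    case Nil
    from assms(1,2) show ?case
      by (cases z) (auto simp: falg_hom_def hom3_def G_sel)
  next
    case (Cons m xs)
    then show ?case
      by (simp add: falg_hom_from_G_Cons[OF assms(1)] falg_hom_from_G_Cons[OF assms(2)])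
  qed
  with assms(3) show ?thesis
    by (auto elim: G_cases)
qed

lemma falg_hom_from_G_exists:
  assumes "falg S d \<alpha>"
  shows "\<exists>h. falg_hom G disc gmap S d \<alpha> h"
proof -
  have met: "met3 S d" and \<alpha>: "hom3 (tens S) (qd S d) S d \<alpha>"
    using assms unfolding falg_def by auto
  define F where "F m s = \<alpha> (tcls S m s)" for m s
  define P where "P z = (case z of ZT \<Rightarrow> pT S | ZL \<Rightarrow> pL S | ZR \<Rightarrow> pR S)" for z
  define eval where "eval = (\<lambda>(xs, z). foldr F xs (P z))"
  define h where "h w = the_elem (eval ` w)" for w
  have "\<alpha> (tcls S Ma (pT S)) = pT S" "\<alpha> (tcls S Mb (pL S)) = pL S" "\<alpha> (tcls S Mc (pR S)) = pR S"
    using \<alpha> unfolding hom3_def tens_sel by auto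
  then have eval_resp: "eval a = eval b" if "(a, b) \<in> G_rel" for a b
    using that foldr_respects_G_rel[of F P]
    by (cases a, cases b) (simp add: eval_def F_def P_def tcls_glue)
  have h_Gcl: "h (Gcl xs z) = foldr F xs (P z)" for xs z
    unfolding h_def
  proof (rule the_elem_image_unique)
    show "Gcl xs z \<noteq> {}"
      using Gcl_self by blast
    show "eval a = foldr F xs (P z)" if "a \<in> Gcl xs z" for a
      using eval_resp[of "(xs, z)" a] that by (simp add: Gcl_def eval_def)
  qed
  have in_S: "foldr F xs (P z) \<in> car S" for xs z
  proof (induction xs)
    case Nil
    show ?case
      using met by (cases z) (simp_all add: met3_def P_def)
  next
    case (Cons m xs)
    then have "tcls S m (foldr F xs (P z)) \<in> car (tens S)"
      by (rule tcls_in_tens)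
    then show ?case
      using \<alpha> unfolding hom3_def F_def by auto
  qed
  have pointed: "h (pT G) = pT S" "h (pL G) = pL S" "h (pR G) = pR S"
    by (simp_all add: G_sel h_Gcl P_def)
  have "hom3 G disc S d h"
    using met _ pointed by (rule hom3_disc) (auto elim!: G_cases simp: h_Gcl in_S)
  moreover have "h (gmap c) = \<alpha> (tmap G S h c)" if "c \<in> car (tens G)" for c
    using that
    by (auto elim!: tens_cases G_cases simp: gmap_tcls_Gcl tmap_tcls[OF pointed] h_Gcl F_def)
  ultimately show ?thesis
    unfolding falg_hom_def by blast
qed

theorem mainTheorem4:
  shows "met3 G disc \<and>
         hom3 (tens G) (qd G disc) G disc gmap \<and>
         (\<forall>(S :: 'a tps) d \<alpha>. falg S d \<alpha> \<longrightarrow>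
            (\<exists>h. hom3 G disc S d h \<and>
                 (\<forall>c\<in>car (tens G). h (gmap c) = \<alpha> (tmap G S h c))) \<and>
            (\<forall>h1 h2. hom3 G disc S d h1 \<and> (\<forall>c\<in>car (tens G). h1 (gmap c) = \<alpha> (tmap G S h1 c)) \<and>
                     hom3 G disc S d h2 \<and> (\<forall>c\<in>car (tens G). h2 (gmap c) = \<alpha> (tmap G S h2 c))
                     \<longrightarrow> (\<forall>x\<in>car G. h1 x = h2 x)))"
  using met3_G gmap_hom falg_hom_from_G_exists falg_hom_from_G_unique
  unfolding falg_hom_def by blast

end
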